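(* Let $T,b>0$, $\alpha\in(0,1)$, and let $s\in C[0,T]$ with $s(0)=b$ and $0<\dot s(t)\le M$ for all $t\in[0,T]$, for some $M>0$. Let $Q_{s,T}=\{(x,t):0<x<s(t),\ 0<t<T\}$ and let $\partial\Gamma_{s,T}=\partial\overline{Q_{s,T}}\setminus(\{T\}\times(0,s(T)))$ denote its parabolic boundary. Suppose $u$ satisfies $u_t-\partial_xD^\alpha u=f$ in $Q_{s,T}$, with $u\in C(\overline{Q_{s,T}})$, $u_t\in C(Q_{s,T})$, and for some $\beta\in(\alpha,1]$, for every $t\in(0,T)$ and every $0<\varepsilon<\omega<s(t)$, $u(\cdot,t)\in W^{2,\frac1{1-\beta}}(\varepsilon,\omega)$. Then: (1) if $f\le0$, then $\max_{\overline{Q_{s,T}}}u$ is attained on $\partial\Gamma_{s,T}$; (2) if $f\ge0$, then $\min_{\overline{Q_{s,T}}}u$ is attained on $\partial\Gamma_{s,T}$.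
   Context: For $\alpha\in(0,1)$ the Caputo derivative in $x$ is $D^{\alpha}u(x,t)=\frac{1}{\Gamma(1-\alpha)}\frac{\partial}{\partial x}\int_0^x(x-p)^{-\alpha}[u(p,t)-u(0,t)]\,dp$, and $\partial_xD^\alpha u$ is its $x$-derivative. *)

theory Defs
  imports "HOL-Analysis.Analysis"
begin

definition Qst :: "(real \<Rightarrow> real) \<Rightarrow> real \<Rightarrow> (real \<times> real) set" where
  "Qst s T = {(x,t). 0 < x \<and> x < s t \<and> 0 < t \<and> t < T}"

definition par_bdry :: "(real \<Rightarrow> real) \<Rightarrow> real \<Rightarrow> (real \<times> real) set" where
  "par_bdry s T = frontier (closure (Qst s T)) - {(x,T) | x. 0 < x \<and> x < s T}"

definition frac_int :: "real \<Rightarrow> (real \<Rightarrow> real \<Rightarrow> real) \<Rightarrow> real \<Rightarrow> real \<Rightarrow> real" where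
  "frac_int \<alpha> u t x = (LBINT p=0..x. (x - p) powr (- \<alpha>) * (u p t - u 0 t))"

definition caputo :: "real \<Rightarrow> (real \<Rightarrow> real \<Rightarrow> real) \<Rightarrow> real \<Rightarrow> real \<Rightarrow> real" where
  "caputo \<alpha> u x t = (1 / Gamma (1 - \<alpha>)) * deriv (frac_int \<alpha> u t) x"

definition Lp_on :: "ereal \<Rightarrow> real \<Rightarrow> real \<Rightarrow> (real \<Rightarrow> real) \<Rightarrow> bool" where
  "Lp_on p a b g \<longleftrightarrow> set_borel_measurable lborel {a..b} g \<and>
     (if p = \<infinity> then (\<exists>C. AE y in lborel. y \<in> {a..b} \<longrightarrow> \<bar>g y\<bar> \<le> C)
      else set_integrable lborel {a..b} (\<lambda>y. \<bar>g y\<bar> powr real_of_ereal p))"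

text \<open>Sobolev space W^{2,p}(a,b) (one dimension): g and g' are absolutely continuous
  (indefinite integrals of integrable functions) and g'' is in L^p.  Since the functions
  considered are continuous, membership is stated for g itself (its continuous representative).\<close>
definition W2p :: "ereal \<Rightarrow> real \<Rightarrow> real \<Rightarrow> (real \<Rightarrow> real) \<Rightarrow> bool" where
  "W2p p a b g \<longleftrightarrow> (\<exists>g1 g2.
     set_integrable lborel {a..b} g1 \<and> set_integrable lborel {a..b} g2 \<and>
     (\<forall>x\<in>{a..b}. g x = g a + (LBINT y=a..x. g1 y)) \<and>
     (\<forall>x\<in>{a..b}. g1 x = g1 a + (LBINT y=a..x. g2 y)) \<and>
     Lp_on p a b g2)"

end

theory Submission
  imports Defs
begin

text \<open>
  Suppose \<open>u\<close> exceeded its maximum over the parabolic boundary. For small \<open>e > 0\<close>, the function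
  \<open>u x t - e * t\<close>, maximised over the part of the closure below a suitable time level, then attains
  its maximum at an interior point \<open>(x0, t0)\<close>. There \<open>u\<^sub>t \<ge> e\<close>, by a one-sided difference quotient
  in time. In space, \<open>w = u(-, t0)\<close> is maximal at \<open>x0\<close> and, by the embedding of W^(2,p) into
  C^(1,\<beta>), flat there to order \<open>1 + \<beta>\<close>. Convexity of the kernel \<open>r powr (-\<alpha>)\<close> and concavity of
  \<open>r powr (1 - \<alpha>)\<close> then bound the backward second differences of
  \<open>F x = \<integral>\<^sub>0\<^sup>x (x - p) powr (-\<alpha>) * (w p - w 0) dp\<close> at \<open>x0\<close> from above by \<open>O(h powr (2 + \<beta> - \<alpha>))\<close>,
  so \<open>F''(x0) \<le> 0\<close>, i.e. the space derivative of the Caputo derivative is \<open>\<le> 0\<close> at \<open>(x0, t0)\<close>.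
  Hence \<open>f \<ge> e > 0\<close> there, contradicting \<open>f \<le> 0\<close>. The minimum principle is the maximum
  principle for \<open>-u\<close>.
\<close>

text \<open>The exponent \<open>p\<close> for which W^(2,p)(a,b) embeds into C^(1,\<beta>)[a,b].\<close>
definition sobolev_exponent :: "real \<Rightarrow> ereal" where
  "sobolev_exponent \<beta> = (if \<beta> = 1 then \<infinity> else ereal (1 / (1 - \<beta>)))"

definition W2p_slices :: "ereal \<Rightarrow> (real \<Rightarrow> real) \<Rightarrow> real \<Rightarrow> (real \<Rightarrow> real \<Rightarrow> real) \<Rightarrow> bool" where
  "W2p_slices p s T u \<longleftrightarrow>
     (\<forall>t\<in>{0<..<T}. \<forall>\<epsilon> \<omega>. 0 < \<epsilon> \<and> \<epsilon> < \<omega> \<and> \<omega> < s t \<longrightarrow> W2p p \<epsilon> \<omega> (\<lambda>x. u x t))"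

definition caputo_heat_solution ::
    "real \<Rightarrow> (real \<Rightarrow> real) \<Rightarrow> real \<Rightarrow> (real \<Rightarrow> real \<Rightarrow> real) \<Rightarrow> (real \<Rightarrow> real \<Rightarrow> real) \<Rightarrow> bool" where
  "caputo_heat_solution \<alpha> s T u f \<longleftrightarrow>
     (\<exists>ut. continuous_on (Qst s T) (\<lambda>(x,t). ut x t) \<and>
       (\<forall>(x,t)\<in>Qst s T.
          ((\<lambda>\<tau>. u x \<tau>) has_real_derivative ut x t) (at t) \<and>
          (\<forall>y\<in>{0<..<s t}. frac_int \<alpha> u t differentiable (at y)) \<and>
          (\<lambda>y. caputo \<alpha> u y t) differentiable (at x) \<and>
          ut x t - deriv (\<lambda>y. caputo \<alpha> u y t) x = f x t))"


section \<open>Real analysis\<close>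

lemma tendsto_mult_powr_at_right_0:
  fixes C \<beta> :: real
  assumes "0 < \<beta>"
  shows "((\<lambda>t. C * t powr \<beta>) \<longlongrightarrow> 0) (at_right 0)"
proof -
  have "((\<lambda>t::real. t powr \<beta>) \<longlongrightarrow> 0) (at_right 0)"
    using assms by (intro tendsto_zero_powrI tendsto_ident_at eventually_at_rightI[of 0 1]) auto
  then show ?thesis
    using tendsto_mult_right_zero by blast
qed

lemma convex_on_second_difference:
  fixes f :: "real \<Rightarrow> real"
  assumes "convex_on A f" "x \<in> A" "x - 2 * h \<in> A"
  shows "2 * f (x - h) \<le> f x + f (x - 2 * h)"
  using convex_onD[OF assms(1), of "1/2" x "x - 2 * h"] assms(2,3)
  by (simp add: algebra_simps)

lemma concave_on_second_difference:
  fixes f :: "real \<Rightarrow> real"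
  assumes "concave_on A f" "x \<in> A" "x - 2 * h \<in> A"
  shows "f x + f (x - 2 * h) \<le> 2 * f (x - h)"
  using convex_on_second_difference[of A "\<lambda>x. - f x" x h] assms by (simp add: concave_on_def)

lemma powr_convex_nonpos:
  fixes p :: real
  assumes "p \<le> 0"
  shows "convex_on {0<..} (\<lambda>x. x powr p)"
proof (rule f''_ge0_imp_convex[where f' = "\<lambda>x. p * x powr (p - 1)"
                                 and f'' = "\<lambda>x. p * ((p - 1) * x powr (p - 1 - 1))"])
  fix x :: real
  assume "x \<in> {0<..}"
  then show "((\<lambda>x. x powr p) has_real_derivative p * x powr (p - 1)) (at x)"
    "((\<lambda>x. p * x powr (p - 1)) has_real_derivative p * ((p - 1) * x powr (p - 1 - 1))) (at x)"
    by (auto intro!: derivative_eq_intros)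
  show "0 \<le> p * ((p - 1) * x powr (p - 1 - 1))"
    using assms by (intro mult_nonpos_nonpos) (auto intro: mult_nonpos_nonneg)
qed auto

lemma powr_concave:
  fixes p :: real
  assumes "0 \<le> p" "p \<le> 1"
  shows "concave_on {0<..} (\<lambda>x. x powr p)"
proof (rule f''_le0_imp_concave[where f' = "\<lambda>x. p * x powr (p - 1)"
                                  and f'' = "\<lambda>x. p * ((p - 1) * x powr (p - 1 - 1))"])
  fix x :: real
  assume "x \<in> {0<..}"
  then show "((\<lambda>x. x powr p) has_real_derivative p * x powr (p - 1)) (at x)"
    "((\<lambda>x. p * x powr (p - 1)) has_real_derivative p * ((p - 1) * x powr (p - 1 - 1))) (at x)"
    by (auto intro!: derivative_eq_intros)
  show "p * ((p - 1) * x powr (p - 1 - 1)) \<le> 0"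
    using assms by (intro mult_nonneg_nonpos mult_nonpos_nonneg) auto
qed auto

lemma le_powr_scaled_plus:
  fixes z \<delta> q :: real
  assumes "z \<ge> 0" "\<delta> > 0" "q > 1"
  shows "z \<le> \<delta> powr (1 - q) * z powr q + \<delta>"
proof (cases "z \<le> \<delta>")
  case True
  moreover have "0 \<le> \<delta> powr (1 - q) * z powr q"
    by simp
  ultimately show ?thesis
    by linarith
next
  case False
  have "z = \<delta> powr (1 - q) * (\<delta> powr (q - 1) * z)"
    using assms by (simp add: mult.assoc[symmetric] powr_add[symmetric])
  also have "\<dots> \<le> \<delta> powr (1 - q) * (z powr (q - 1) * z)"
    using False assms by (intro mult_left_mono mult_right_mono powr_mono2) auto
  also have "z powr (q - 1) * z = z powr q"
    using False assms by (simp add: powr_diff)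
  finally show ?thesis
    using assms(2) by linarith
qed

text \<open>One application of L'Hopital's rule suffices: the derivative of the second difference in
  \<open>h\<close> is a first difference of \<open>F'\<close>.\<close>
lemma second_difference_quotient_tendsto:
  fixes F F' :: "real \<Rightarrow> real"
  assumes "a < x"
    and F: "\<And>y. a < y \<Longrightarrow> y \<le> x \<Longrightarrow> (F has_real_derivative F' y) (at y)"
    and F': "(F' has_real_derivative L) (at x)"
  shows "((\<lambda>h. (F x - 2 * F (x - h) + F (x - 2 * h)) / h\<^sup>2) \<longlongrightarrow> L) (at_right 0)"
proof (rule lhopital_right_0)
  have small: "\<forall>\<^sub>F h in at_right 0. 0 < h \<and> 2 * h < x - a"
    using assms(1) by (intro eventually_at_rightI[of 0 "(x - a) / 2"]) auto
  have shift: "filterlim (\<lambda>h. x - c * h) (at x) (at_right 0)" if "c > 0" for c :: real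
    unfolding filterlim_at using that
    by (auto intro!: tendsto_eq_intros eventually_at_rightI[of 0 1])
  have "isCont F x"
    using F[of x] assms(1) by (simp add: DERIV_isCont)
  then have "((\<lambda>h. F (x - c * h)) \<longlongrightarrow> F x) (at_right 0)" for c
    by (rule isCont_tendsto_compose) (auto intro!: tendsto_eq_intros)
  from this[of 1] this[of 2]
  have "((\<lambda>h. F x - 2 * F (x - h) + F (x - 2 * h)) \<longlongrightarrow> F x - 2 * F x + F x) (at_right 0)"
    by (intro tendsto_add tendsto_diff tendsto_mult tendsto_const) simp_all
  then show "((\<lambda>h. F x - 2 * F (x - h) + F (x - 2 * h)) \<longlongrightarrow> 0) (at_right 0)"
    by simp
  show "((\<lambda>h. h\<^sup>2) \<longlongrightarrow> 0) (at_right (0::real))"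
    by (auto intro!: tendsto_eq_intros)
  show "\<forall>\<^sub>F h in at_right (0::real). h\<^sup>2 \<noteq> 0"
    using small by eventually_elim simp
  show "\<forall>\<^sub>F h in at_right (0::real). 2 * h \<noteq> 0"
    using small by eventually_elim simp
  show "\<forall>\<^sub>F h in at_right 0. ((\<lambda>h. F x - 2 * F (x - h) + F (x - 2 * h)) has_real_derivative
          2 * F' (x - h) - 2 * F' (x - 2 * h)) (at h)"
    using small by eventually_elim (auto intro!: derivative_eq_intros DERIV_chain2[OF F])
  show "\<forall>\<^sub>F h in at_right (0::real). ((\<lambda>h. h\<^sup>2) has_real_derivative 2 * h) (at h)"
    by (intro always_eventually allI) (auto intro!: derivative_eq_intros)
  define q where "q y = (F' y - F' x) / (y - x)" for y
  have "(q \<longlongrightarrow> L) (at x)"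
    using F' unfolding q_def has_field_derivative_iff .
  then have "((\<lambda>h. 2 * q (x - 2 * h) - q (x - 1 * h)) \<longlongrightarrow> 2 * L - L) (at_right 0)"
    by (intro tendsto_intros filterlim_compose[OF _ shift]) auto
  moreover have "\<forall>\<^sub>F h in at_right 0.
      2 * q (x - 2 * h) - q (x - 1 * h) = (2 * F' (x - h) - 2 * F' (x - 2 * h)) / (2 * h)"
    using small by eventually_elim (auto simp: q_def field_simps)
  ultimately show "((\<lambda>h. (2 * F' (x - h) - 2 * F' (x - 2 * h)) / (2 * h)) \<longlongrightarrow> L) (at_right 0)"
    by (simp add: tendsto_cong)
qed

lemma second_deriv_nonpos_of_second_difference_le:
  fixes F F' :: "real \<Rightarrow> real"
  assumes "a < x"
    and "\<And>y. a < y \<Longrightarrow> y \<le> x \<Longrightarrow> (F has_real_derivative F' y) (at y)"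
    and "(F' has_real_derivative L) (at x)"
    and "0 < \<gamma>"
    and bound: "\<forall>\<^sub>F h in at_right 0. F x - 2 * F (x - h) + F (x - 2 * h) \<le> K * h powr (2 + \<gamma>)"
  shows "L \<le> 0"
proof -
  have "\<forall>\<^sub>F h in at_right 0. (F x - 2 * F (x - h) + F (x - 2 * h)) / h\<^sup>2 \<le> K * h powr \<gamma>"
    using bound eventually_at_right_less[of 0]
  proof eventually_elim
    case (elim h)
    then have "h powr (2 + \<gamma>) = h\<^sup>2 * h powr \<gamma>"
      by (simp add: powr_add powr_realpow)
    with elim show ?case
      by (simp add: pos_divide_le_eq mult_ac)
  qed
  from tendsto_le[OF trivial_limit_at_right_real tendsto_mult_powr_at_right_0[OF assms(4)]
      second_difference_quotient_tendsto[OF assms(1-3)] this]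
  show ?thesis .
qed


section \<open>The fractional integral\<close>

lemma frac_kernel_has_integral:
  fixes a x \<alpha> :: real
  assumes "a \<le> x" "0 < \<alpha>" "\<alpha> < 1"
  shows "((\<lambda>p. (x - p) powr (-\<alpha>)) has_integral (x - a) powr (1 - \<alpha>) / (1 - \<alpha>)) {a..x}"
proof -
  define G where "G p = - ((x - p) powr (1 - \<alpha>) / (1 - \<alpha>))" for p
  have "((\<lambda>p. (x - p) powr (-\<alpha>)) has_integral (G x - G a)) {a..x}"
  proof (rule fundamental_theorem_of_calculus_interior[OF assms(1)])
    show "continuous_on {a..x} G"
      unfolding G_def using assms by (intro continuous_intros continuous_on_powr') auto
    fix p
    assume p: "p \<in> {a<..<x}"
    have "((\<lambda>p. (x - p) powr (1 - \<alpha>)) has_real_derivative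
            (1 - \<alpha>) * (x - p) powr (1 - \<alpha> - 1) * (-1)) (at p)"
      using p by (intro DERIV_fun_powr[simplified] derivative_eq_intros) auto
    then have "(G has_real_derivative (x - p) powr (-\<alpha>)) (at p)"
      unfolding G_def using assms p by (auto intro!: derivative_eq_intros)
    then show "(G has_vector_derivative (x - p) powr (-\<alpha>)) (at p)"
      by (simp add: has_real_derivative_iff_has_vector_derivative)
  qed
  moreover have "G x - G a = (x - a) powr (1 - \<alpha>) / (1 - \<alpha>)"
    unfolding G_def by simp
  ultimately show ?thesis by simp
qed

lemma frac_kernel_set_integral:
  fixes a x \<alpha> :: real
  assumes "a \<le> x" "0 < \<alpha>" "\<alpha> < 1"
  shows frac_kernel_set_integrable: "set_integrable lborel {a..x} (\<lambda>p. (x - p) powr (-\<alpha>))"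
    and "(LINT p:{a..x}|lborel. (x - p) powr (-\<alpha>)) = (x - a) powr (1 - \<alpha>) / (1 - \<alpha>)"
proof -
  have int: "((\<lambda>p. (x - p) powr (-\<alpha>)) has_integral (x - a) powr (1 - \<alpha>) / (1 - \<alpha>)) {a..x}"
    using assms by (rule frac_kernel_has_integral)
  then have "set_integrable lebesgue {a..x} (\<lambda>p. (x - p) powr (-\<alpha>))"
    by (intro nonnegative_absolutely_integrable_1) (auto simp: integrable_on_def)
  moreover have "(\<lambda>p. indicator {a..x} p *\<^sub>R (x - p) powr (-\<alpha>)) \<in> borel_measurable lborel"
    by measurable
  ultimately show integrable: "set_integrable lborel {a..x} (\<lambda>p. (x - p) powr (-\<alpha>))"
    unfolding set_integrable_def by (simp add: integrable_completion)
  show "(LINT p:{a..x}|lborel. (x - p) powr (-\<alpha>)) = (x - a) powr (1 - \<alpha>) / (1 - \<alpha>)"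
    using set_borel_integral_eq_integral(2)[OF integrable] int by (simp add: integral_unique)
qed

lemma frac_kernel_mult_set_integrable:
  fixes a x \<alpha> :: real and \<phi> :: "real \<Rightarrow> real"
  assumes "a \<le> x" "0 < \<alpha>" "\<alpha> < 1" "continuous_on {a..x} \<phi>"
  shows "set_integrable lborel {a..x} (\<lambda>p. (x - p) powr (-\<alpha>) * \<phi> p)"
proof -
  obtain B where B: "\<And>p. p \<in> {a..x} \<Longrightarrow> norm (\<phi> p) \<le> B"
    using compact_imp_bounded[OF compact_continuous_image[OF assms(4) compact_Icc]]
    unfolding bounded_iff by (metis image_eqI)
  have "(\<lambda>p. indicator {a..x} p *\<^sub>R \<phi> p) \<in> borel_measurable borel"
    by (rule borel_measurable_continuous_on_indicator[OF _ assms(4)]) auto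
  moreover have "(\<lambda>p::real. (x - p) powr (-\<alpha>)) \<in> borel_measurable borel"
    by measurable
  moreover have "(\<lambda>p. indicator {a..x} p *\<^sub>R ((x - p) powr (-\<alpha>) * \<phi> p)) =
                 (\<lambda>p. (x - p) powr (-\<alpha>) * (indicator {a..x} p *\<^sub>R \<phi> p))"
    by (auto simp: indicator_def)
  ultimately have "set_borel_measurable lborel {a..x} (\<lambda>p. (x - p) powr (-\<alpha>) * \<phi> p)"
    unfolding set_borel_measurable_def by simp
  then show ?thesis
  proof (rule set_integrable_bound[rotated])
    show "set_integrable lborel {a..x} (\<lambda>p. B * (x - p) powr (-\<alpha>))"
      using frac_kernel_set_integrable[OF assms(1-3)] by simp
    show "AE p in lborel. p \<in> {a..x} \<longrightarrow>
            norm ((x - p) powr (-\<alpha>) * \<phi> p) \<le> norm (B * (x - p) powr (-\<alpha>))"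
    proof (intro AE_I2 impI)
      fix p
      assume p: "p \<in> {a..x}"
      then have "(x - p) powr (-\<alpha>) * norm (\<phi> p) \<le> (x - p) powr (-\<alpha>) * B"
        using B by (intro mult_left_mono) auto
      moreover have "0 \<le> B"
        using B[OF p] norm_ge_zero order_trans by blast
      ultimately show "norm ((x - p) powr (-\<alpha>) * \<phi> p) \<le> norm (B * (x - p) powr (-\<alpha>))"
        by (simp add: abs_mult mult.commute)
    qed
  qed
qed

lemma frac_integral_eq_lborel_integral:
  fixes \<phi> :: "real \<Rightarrow> real"
  assumes "0 \<le> x" "0 < \<alpha>" "\<alpha> < 1" "continuous_on {0..x} \<phi>"
  shows "integrable lborel (\<lambda>p. indicator {0..x} p * (x - p) powr (-\<alpha>) * \<phi> p)"
    and "(LBINT p=0..x. (x - p) powr (-\<alpha>) * \<phi> p)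
         = integral\<^sup>L lborel (\<lambda>p. indicator {0..x} p * (x - p) powr (-\<alpha>) * \<phi> p)"
proof -
  show "integrable lborel (\<lambda>p. indicator {0..x} p * (x - p) powr (-\<alpha>) * \<phi> p)"
    using frac_kernel_mult_set_integrable[OF assms] unfolding set_integrable_def by (simp add: mult.assoc)
  have "(LBINT p=0..x. (x - p) powr (-\<alpha>) * \<phi> p) = (LBINT p=ereal 0..ereal x. (x - p) powr (-\<alpha>) * \<phi> p)"
    by (simp add: zero_ereal_def)
  also have "\<dots> = (LBINT p:{0..x}. (x - p) powr (-\<alpha>) * \<phi> p)"
    using assms(1) by (rule interval_integral_Icc)
  finally show "(LBINT p=0..x. (x - p) powr (-\<alpha>) * \<phi> p)
      = integral\<^sup>L lborel (\<lambda>p. indicator {0..x} p * (x - p) powr (-\<alpha>) * \<phi> p)"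
    by (simp add: set_lebesgue_integral_def mult.assoc)
qed

text \<open>Since \<open>g \<le> 0\<close>, only the middle kernel contributes positively, and only on
  \<open>[x0 - 2 * h, x0 - h]\<close>; below \<open>x0 - 2 * h\<close> the second difference of the convex kernel is
  nonnegative.\<close>
lemma frac_kernel_second_difference_mult_le:
  fixes g :: "real \<Rightarrow> real" and x0 h C \<alpha> \<beta> p :: real
  assumes "0 < \<alpha>" "h > 0" "2 * h \<le> x0" "\<beta> > 0" "C \<ge> 0"
    and g_nonpos: "\<And>p. p \<in> {0..x0} \<Longrightarrow> g p \<le> 0"
    and g_flat: "\<And>p. p \<in> {x0 - 2 * h..x0} \<Longrightarrow> \<bar>g p\<bar> \<le> C * (x0 - p) powr (1 + \<beta>)"
  shows "(indicator {0..x0} p * (x0 - p) powr (-\<alpha>)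
          - 2 * (indicator {0..x0 - h} p * (x0 - h - p) powr (-\<alpha>))
          + indicator {0..x0 - 2 * h} p * (x0 - 2 * h - p) powr (-\<alpha>)) * g p
         \<le> 2 * C * (2 * h) powr (1 + \<beta>) * (indicator {x0 - 2 * h..x0 - h} p * (x0 - h - p) powr (-\<alpha>))"
    (is "?K * g p \<le> ?B")
proof -
  have B_nonneg: "?B \<ge> 0"
    using assms by (intro mult_nonneg_nonneg) auto
  consider "p < 0 \<or> p > x0" | "0 \<le> p \<and> p < x0 - 2 * h" | "x0 - 2 * h \<le> p \<and> p \<le> x0"
    by linarith
  then show ?thesis
  proof cases
    case 1
    then have "?K = 0"
      using assms by auto
    then show ?thesis
      using B_nonneg by simp
  next
    case 2
    then have K: "?K = (x0 - p) powr (-\<alpha>) - 2 * ((x0 - p) - h) powr (-\<alpha>) + ((x0 - p) - 2 * h) powr (-\<alpha>)"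
      using assms by (simp add: diff_diff_eq add.commute)
    have "?K \<ge> 0"
      unfolding K using 2 assms
        convex_on_second_difference[OF powr_convex_nonpos[of "-\<alpha>"], of "x0 - p" h]
      by auto
    moreover have "g p \<le> 0"
      using 2 assms by (intro g_nonpos) auto
    ultimately have "?K * g p \<le> 0"
      by (simp add: mult_nonneg_nonpos)
    then show ?thesis
      using B_nonneg by linarith
  next
    case 3
    then have g_nonpos_p: "g p \<le> 0"
      using assms by (intro g_nonpos) auto
    have outer: "indicator {0..x0} p * (x0 - p) powr (-\<alpha>) * g p \<le> 0"
      "indicator {0..x0 - 2 * h} p * (x0 - 2 * h - p) powr (-\<alpha>) * g p \<le> 0"
      using g_nonpos_p by (intro mult_nonneg_nonpos; simp)+
    have middle: "- 2 * (indicator {0..x0 - h} p * (x0 - h - p) powr (-\<alpha>)) * g p \<le> ?B"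
    proof (cases "p \<le> x0 - h")
      case True
      then have ind: "indicator {0..x0 - h} p = (1::real)" "indicator {x0 - 2 * h..x0 - h} p = (1::real)"
        using 3 assms by auto
      have "\<bar>g p\<bar> \<le> C * (x0 - p) powr (1 + \<beta>)"
        using g_flat 3 by auto
      also have "\<dots> \<le> C * (2 * h) powr (1 + \<beta>)"
        using 3 assms by (intro mult_left_mono powr_mono2) simp_all
      finally have "- g p \<le> C * (2 * h) powr (1 + \<beta>)"
        by linarith
      then have "2 * (x0 - h - p) powr (-\<alpha>) * (- g p)
                 \<le> 2 * (x0 - h - p) powr (-\<alpha>) * (C * (2 * h) powr (1 + \<beta>))"
        by (intro mult_left_mono) auto
      then show ?thesis
        unfolding ind by (simp only: mult_1 mult_ac mult_minus_left mult_minus_right)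
    next
      case False
      then show ?thesis
        using B_nonneg by simp
    qed
    have "?K * g p = indicator {0..x0} p * (x0 - p) powr (-\<alpha>) * g p
        + indicator {0..x0 - 2 * h} p * (x0 - 2 * h - p) powr (-\<alpha>) * g p
        + (- 2 * (indicator {0..x0 - h} p * (x0 - h - p) powr (-\<alpha>)) * g p)"
      by (simp add: algebra_simps)
    with outer middle show ?thesis
      by linarith
  qed
qed

lemma frac_integral_second_difference_le_of_nonpos:
  fixes g :: "real \<Rightarrow> real" and x0 h C \<alpha> \<beta> :: real
  assumes \<alpha>: "0 < \<alpha>" "\<alpha> < 1" and h: "h > 0" "2 * h \<le> x0" and "\<beta> > 0" "C \<ge> 0"
    and cont: "continuous_on {0..x0} g"
    and g_nonpos: "\<And>p. p \<in> {0..x0} \<Longrightarrow> g p \<le> 0"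
    and g_flat: "\<And>p. p \<in> {x0 - 2 * h..x0} \<Longrightarrow> \<bar>g p\<bar> \<le> C * (x0 - p) powr (1 + \<beta>)"
    and G_def: "G = (\<lambda>x. LBINT p=0..x. (x - p) powr (-\<alpha>) * g p)"
  shows "G x0 - 2 * G (x0 - h) + G (x0 - 2 * h)
         \<le> 2 * C * (2 * h) powr (1 + \<beta>) * (h powr (1 - \<alpha>) / (1 - \<alpha>))"
proof -
  define K where "K x p = indicator {0..x} p * (x - p) powr (-\<alpha>)" for x p :: real
  define B where
    "B p = 2 * C * (2 * h) powr (1 + \<beta>) * (indicator {x0 - 2 * h..x0 - h} p * (x0 - h - p) powr (-\<alpha>))"
    for p
  have x: "0 \<le> x0 - 2 * h" "x0 - 2 * h \<le> x0 - h" "x0 - h \<le> x0"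
    using h by auto
  have K_integrable: "integrable lborel (\<lambda>p. K x p * g p)"
    and G_eq: "G x = integral\<^sup>L lborel (\<lambda>p. K x p * g p)" if "0 \<le> x" "x \<le> x0" for x
    using frac_integral_eq_lborel_integral[OF that(1) \<alpha> continuous_on_subset[OF cont]] that
    unfolding K_def G_def by auto
  have B_integral: "integrable lborel B"
    "integral\<^sup>L lborel B = 2 * C * (2 * h) powr (1 + \<beta>) * (h powr (1 - \<alpha>) / (1 - \<alpha>))"
    using frac_kernel_set_integral[OF x(2) \<alpha>]
    unfolding set_integrable_def set_lebesgue_integral_def B_def by simp_all
  have "G x0 - 2 * G (x0 - h) + G (x0 - 2 * h)
        = integral\<^sup>L lborel (\<lambda>p. K x0 p * g p - 2 * (K (x0 - h) p * g p) + K (x0 - 2 * h) p * g p)"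
    using x K_integrable[of x0] K_integrable[of "x0 - h"] K_integrable[of "x0 - 2 * h"]
    by (simp add: G_eq[of x0] G_eq[of "x0 - h"] G_eq[of "x0 - 2 * h"])
  also have "\<dots> \<le> integral\<^sup>L lborel B"
  proof (rule integral_mono)
    show "integrable lborel (\<lambda>p. K x0 p * g p - 2 * (K (x0 - h) p * g p) + K (x0 - 2 * h) p * g p)"
      using x K_integrable[of x0] K_integrable[of "x0 - h"] K_integrable[of "x0 - 2 * h"] by simp
    fix p
    have "(K x0 p - 2 * K (x0 - h) p + K (x0 - 2 * h) p) * g p \<le> B p"
      unfolding K_def B_def using assms by (intro frac_kernel_second_difference_mult_le) auto
    then show "K x0 p * g p - 2 * (K (x0 - h) p * g p) + K (x0 - 2 * h) p * g p \<le> B p"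
      by (simp add: algebra_simps)
  qed (fact B_integral(1))
  finally show ?thesis
    using B_integral(2) by simp
qed

lemma frac_integral_shift:
  fixes w :: "real \<Rightarrow> real" and x c \<alpha> :: real
  assumes "0 \<le> x" "0 < \<alpha>" "\<alpha> < 1" "continuous_on {0..x} w"
  shows "(LBINT p=0..x. (x - p) powr (-\<alpha>) * (w p - w 0))
         = (LBINT p=0..x. (x - p) powr (-\<alpha>) * (w p - c)) + (c - w 0) * (x powr (1 - \<alpha>) / (1 - \<alpha>))"
proof -
  have integrable: "set_integrable lborel {0..x} (\<lambda>p. (x - p) powr (-\<alpha>) * (w p - c))"
    "set_integrable lborel {0..x} (\<lambda>p. (c - w 0) * (x - p) powr (-\<alpha>))"
    using assms frac_kernel_set_integrable[OF assms(1-3)]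
    by (auto intro!: frac_kernel_mult_set_integrable continuous_intros)
  have Icc: "(LBINT p=0..x. f p) = (LBINT p:{0..x}. f p)" for f :: "real \<Rightarrow> real"
    using interval_integral_Icc[OF assms(1), of f] by (simp add: zero_ereal_def)
  have "(LBINT p=0..x. (x - p) powr (-\<alpha>) * (w p - w 0))
        = (LBINT p:{0..x}. (x - p) powr (-\<alpha>) * (w p - c) + (c - w 0) * (x - p) powr (-\<alpha>))"
    unfolding Icc by (simp add: algebra_simps)
  also have "\<dots> = (LBINT p:{0..x}. (x - p) powr (-\<alpha>) * (w p - c))
                   + (c - w 0) * (LBINT p:{0..x}. (x - p) powr (-\<alpha>))"
    using integrable by (simp add: set_integral_add set_integral_mult_right)
  also have "\<dots> = (LBINT p=0..x. (x - p) powr (-\<alpha>) * (w p - c)) + (c - w 0) * (x powr (1 - \<alpha>) / (1 - \<alpha>))"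
    unfolding Icc frac_kernel_set_integral(2)[OF assms(1-3)] by simp
  finally show ?thesis .
qed

text \<open>The shift by \<open>w x0\<close> leaves \<open>w x0 - w 0 \<ge> 0\<close> times a second difference of the concave function
  \<open>x powr (1 - \<alpha>) / (1 - \<alpha>)\<close>, which is \<open>\<le> 0\<close>.\<close>
lemma frac_integral_second_difference_le:
  fixes w :: "real \<Rightarrow> real" and x0 h C \<alpha> \<beta> :: real
  assumes \<alpha>: "0 < \<alpha>" "\<alpha> < 1" and h: "h > 0" "2 * h < x0" and "\<beta> > 0" "C \<ge> 0"
    and cont: "continuous_on {0..x0} w"
    and max: "\<And>p. p \<in> {0..x0} \<Longrightarrow> w p \<le> w x0"
    and flat: "\<And>p. p \<in> {x0 - 2 * h..x0} \<Longrightarrow> \<bar>w p - w x0\<bar> \<le> C * (x0 - p) powr (1 + \<beta>)"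
    and F_def: "F = (\<lambda>x. LBINT p=0..x. (x - p) powr (-\<alpha>) * (w p - w 0))"
  shows "F x0 - 2 * F (x0 - h) + F (x0 - 2 * h)
         \<le> 2 * C * (2 * h) powr (1 + \<beta>) * (h powr (1 - \<alpha>) / (1 - \<alpha>))"
proof -
  define G where "G = (\<lambda>x. LBINT p=0..x. (x - p) powr (-\<alpha>) * (w p - w x0))"
  define P where "P x = x powr (1 - \<alpha>) / (1 - \<alpha>)" for x
  have F_eq: "F x = G x + (w x0 - w 0) * P x" if "0 \<le> x" "x \<le> x0" for x
    unfolding F_def G_def P_def
    using frac_integral_shift[OF that(1) \<alpha> continuous_on_subset[OF cont]] that by auto
  have "G x0 - 2 * G (x0 - h) + G (x0 - 2 * h)
        \<le> 2 * C * (2 * h) powr (1 + \<beta>) * (h powr (1 - \<alpha>) / (1 - \<alpha>))"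
    using assms max by (intro frac_integral_second_difference_le_of_nonpos[OF \<alpha> _ _ _ _ _ _ _ G_def])
      (auto intro!: continuous_intros)
  moreover have "(w x0 - w 0) * (P x0 - 2 * P (x0 - h) + P (x0 - 2 * h)) \<le> 0"
  proof (rule mult_nonneg_nonpos)
    show "w x0 - w 0 \<ge> 0"
      using max[of 0] h by auto
    have "x0 powr (1 - \<alpha>) - 2 * (x0 - h) powr (1 - \<alpha>) + (x0 - 2 * h) powr (1 - \<alpha>) \<le> 0"
      using concave_on_second_difference[OF powr_concave[of "1 - \<alpha>"], of x0 h] \<alpha> h by simp
    then show "P x0 - 2 * P (x0 - h) + P (x0 - 2 * h) \<le> 0"
      using \<alpha> unfolding P_def by (simp add: diff_divide_distrib[symmetric] add_divide_distrib[symmetric]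
        divide_nonpos_pos)
  qed
  ultimately show ?thesis
    using h by (simp add: F_eq algebra_simps)
qed


section \<open>Sobolev functions at an interior maximum\<close>

lemma set_integral_Icc_abs_le:
  fixes f :: "real \<Rightarrow> real"
  assumes "set_integrable lborel {u..v} f" "u \<le> v" "\<And>y. y \<in> {u..v} \<Longrightarrow> \<bar>f y\<bar> \<le> M"
  shows "\<bar>LINT y:{u..v}|lborel. f y\<bar> \<le> M * (v - u)"
proof -
  have "\<bar>LINT y:{u..v}|lborel. f y\<bar> \<le> (LINT y:{u..v}|lborel. \<bar>f y\<bar>)"
    using set_integral_norm_bound[OF assms(1)] by simp
  also have "\<dots> \<le> (LINT y:{u..v}|lborel. M)"
  proof (rule set_integral_mono)
    show "set_integrable lborel {u..v} (\<lambda>y. \<bar>f y\<bar>)"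
      using assms(1) by (rule set_integrable_abs)
    show "set_integrable lborel {u..v} (\<lambda>y. M)"
      by (rule borel_integrable_atLeastAtMost') auto
  qed (use assms in auto)
  also have "\<dots> = M * (v - u)"
    using assms(2) by (simp add: set_integral_const)
  finally show ?thesis .
qed

lemma indefinite_integral_diff:
  fixes f g :: "real \<Rightarrow> real"
  assumes "set_integrable lborel {a..b} g" "\<forall>x\<in>{a..b}. f x = f a + (LBINT y=a..x. g y)"
    and "a \<le> u" "u \<le> v" "v \<le> b"
  shows "f v - f u = (LINT y:{u..v}|lborel. g y)"
proof -
  have "f v - f u = (LBINT y=a..v. g y) - (LBINT y=a..u. g y)"
    using assms(2)[rule_format, of v] assms(2)[rule_format, of u] assms(3-5) by simp
  also have "(LBINT y=a..v. g y) = (LINT y:{a..v}|lborel. g y)"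
    using assms by (intro interval_integral_Icc) auto
  also have "{a..v} = {a..<u} \<union> {u..v}"
    using assms by auto
  also have "(LINT y:{a..<u} \<union> {u..v}|lborel. g y)
             = (LINT y:{a..<u}|lborel. g y) + (LINT y:{u..v}|lborel. g y)"
    using assms by (intro set_integral_Un set_integrable_subset[OF assms(1)]) auto
  also have "(LBINT y=a..u. g y) = (LINT y:{a..<u}|lborel. g y)"
    using assms by (intro interval_integral_Ico) auto
  finally show ?thesis by simp
qed

lemma set_integral_abs_le_if_AE_bounded:
  fixes g :: "real \<Rightarrow> real"
  assumes "set_integrable lborel {u..v} g" "AE y in lborel. y \<in> {u..v} \<longrightarrow> \<bar>g y\<bar> \<le> C" "u \<le> v"
  shows "(LINT y:{u..v}|lborel. \<bar>g y\<bar>) \<le> C * (v - u)"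
proof -
  have "(LINT y:{u..v}|lborel. \<bar>g y\<bar>) \<le> (LINT y:{u..v}|lborel. C)"
  proof (rule set_integral_mono_AE)
    show "set_integrable lborel {u..v} (\<lambda>y. \<bar>g y\<bar>)"
      using assms(1) by (rule set_integrable_abs)
    show "set_integrable lborel {u..v} (\<lambda>y. C)"
      by (rule borel_integrable_atLeastAtMost') auto
    show "AE y\<in>{u..v} in lborel. \<bar>g y\<bar> \<le> C"
      using assms(2) by simp
  qed
  then show ?thesis
    using assms(3) by (simp add: set_integral_const mult_ac)
qed

text \<open>Hoelder's inequality with exponent \<open>1 / (1 - \<beta>)\<close>, up to the constant: integrate
  \<open>le_powr_scaled_plus\<close> with \<open>\<delta> = (v - u) powr (\<beta> - 1)\<close>.\<close>
lemma set_integral_abs_le_powr_if_powr_integrable: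
  fixes g :: "real \<Rightarrow> real" and \<beta> :: real
  defines "q \<equiv> 1 / (1 - \<beta>)"
  assumes \<beta>: "0 < \<beta>" "\<beta> < 1" and "u \<le> v"
    and g: "set_integrable lborel {u..v} g" "set_integrable lborel {u..v} (\<lambda>y. \<bar>g y\<bar> powr q)"
  shows "(LINT y:{u..v}|lborel. \<bar>g y\<bar>) \<le> ((LINT y:{u..v}|lborel. \<bar>g y\<bar> powr q) + 1) * (v - u) powr \<beta>"
proof (cases "u = v")
  case True
  then show ?thesis
    using set_integral_Icc_abs_le[OF set_integrable_abs[OF g(1)], of "\<bar>g u\<bar>"] by simp
next
  case False
  define t where "t = v - u"
  have t: "t > 0"
    using False \<open>u \<le> v\<close> t_def by simp
  define \<delta> where "\<delta> = t powr (\<beta> - 1)"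
  have \<delta>: "\<delta> > 0"
    unfolding \<delta>_def using t by simp
  have q: "q > 1"
    unfolding q_def using \<beta> by (simp add: field_simps)
  have \<delta>_powr: "\<delta> powr (1 - q) = t powr \<beta>"
  proof -
    have "(\<beta> - 1) * (1 - q) = \<beta>"
      unfolding q_def using \<beta> by (simp add: field_simps)
    then show ?thesis
      unfolding \<delta>_def using t by (simp add: powr_powr)
  qed
  have \<delta>_t: "\<delta> * t = t powr \<beta>"
    unfolding \<delta>_def using t by (simp add: powr_add[of t "\<beta> - 1" 1, simplified])
  have const: "set_integrable lborel {u..v} (\<lambda>_. \<delta>)"
    by (rule borel_integrable_atLeastAtMost') auto
  have "(LINT y:{u..v}|lborel. \<bar>g y\<bar>) \<le> (LINT y:{u..v}|lborel. \<delta> powr (1 - q) * \<bar>g y\<bar> powr q + \<delta>)"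
    using le_powr_scaled_plus[OF _ \<delta> q] g const
    by (intro set_integral_mono set_integrable_abs set_integral_add) auto
  also have "\<dots> = \<delta> powr (1 - q) * (LINT y:{u..v}|lborel. \<bar>g y\<bar> powr q) + \<delta> * t"
    using g const \<open>u \<le> v\<close> unfolding t_def by (simp add: set_integral_add set_integral_const)
  also have "\<dots> = ((LINT y:{u..v}|lborel. \<bar>g y\<bar> powr q) + 1) * t powr \<beta>"
    unfolding \<delta>_powr \<delta>_t by (simp add: algebra_simps)
  finally show ?thesis
    unfolding t_def .
qed

lemma Lp_on_set_integral_abs_le_powr:
  fixes g :: "real \<Rightarrow> real" and a b \<beta> :: real
  assumes "0 < \<beta>" "\<beta> \<le> 1"
    and g: "set_integrable lborel {a..b} g" "Lp_on (sobolev_exponent \<beta>) a b g"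
  obtains C where "C \<ge> 0"
    "\<And>u v. a \<le> u \<Longrightarrow> u \<le> v \<Longrightarrow> v \<le> b \<Longrightarrow> (LINT y:{u..v}|lborel. \<bar>g y\<bar>) \<le> C * (v - u) powr \<beta>"
proof (cases "\<beta> = 1")
  case True
  then obtain C where C: "AE y in lborel. y \<in> {a..b} \<longrightarrow> \<bar>g y\<bar> \<le> C"
    using g(2) unfolding Lp_on_def sobolev_exponent_def by auto
  show ?thesis
  proof (rule that[of "max C 0"])
    fix u v
    assume uv: "a \<le> u" "u \<le> v" "v \<le> b"
    have "(LINT y:{u..v}|lborel. \<bar>g y\<bar>) \<le> max C 0 * (v - u)"
    proof (rule set_integral_abs_le_if_AE_bounded)
      show "set_integrable lborel {u..v} g"
        using uv by (intro set_integrable_subset[OF g(1)]) auto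
      show "AE y in lborel. y \<in> {u..v} \<longrightarrow> \<bar>g y\<bar> \<le> max C 0"
        using C by eventually_elim (use uv in auto)
    qed (use uv in simp)
    then show "(LINT y:{u..v}|lborel. \<bar>g y\<bar>) \<le> max C 0 * (v - u) powr \<beta>"
      using True uv by simp
  qed simp
next
  case False
  define q where "q = 1 / (1 - \<beta>)"
  have g_q: "set_integrable lborel {a..b} (\<lambda>y. \<bar>g y\<bar> powr q)"
    using g(2) False unfolding Lp_on_def q_def sobolev_exponent_def by auto
  define A where "A = (LINT y:{a..b}|lborel. \<bar>g y\<bar> powr q)"
  have "A \<ge> 0"
    unfolding A_def set_lebesgue_integral_def
    by (intro Bochner_Integration.integral_nonneg) (auto simp: indicator_def)
  show ?thesis
  proof (rule that[of "A + 1"])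
    fix u v
    assume uv: "a \<le> u" "u \<le> v" "v \<le> b"
    have g_q_uv: "set_integrable lborel {u..v} (\<lambda>y. \<bar>g y\<bar> powr q)"
      using uv by (intro set_integrable_subset[OF g_q]) auto
    have "(LINT y:{u..v}|lborel. \<bar>g y\<bar>) \<le> ((LINT y:{u..v}|lborel. \<bar>g y\<bar> powr q) + 1) * (v - u) powr \<beta>"
      unfolding q_def using False assms uv g_q_uv[unfolded q_def]
      by (intro set_integral_abs_le_powr_if_powr_integrable set_integrable_subset[OF g(1)]) auto
    also have "(LINT y:{u..v}|lborel. \<bar>g y\<bar> powr q) \<le> A"
      unfolding A_def set_lebesgue_integral_def
    proof (rule integral_mono)
      show "integrable lborel (\<lambda>y. indicat_real {u..v} y *\<^sub>R \<bar>g y\<bar> powr q)"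
        using g_q_uv unfolding set_integrable_def .
      show "integrable lborel (\<lambda>y. indicat_real {a..b} y *\<^sub>R \<bar>g y\<bar> powr q)"
        using g_q unfolding set_integrable_def .
    qed (use uv in \<open>auto simp: indicator_def\<close>)
    finally show "(LINT y:{u..v}|lborel. \<bar>g y\<bar>) \<le> (A + 1) * (v - u) powr \<beta>"
      by (simp add: mult_right_mono)
  qed (use \<open>A \<ge> 0\<close> in simp)
qed

lemma W2p_first_order_remainder:
  fixes w :: "real \<Rightarrow> real" and a b \<beta> :: real
  assumes "0 < \<beta>" "\<beta> \<le> 1" "W2p (sobolev_exponent \<beta>) a b w"
  obtains C w' where "C \<ge> 0"
    "\<And>u r v. a \<le> u \<Longrightarrow> u \<le> r \<Longrightarrow> r \<le> v \<Longrightarrow> v \<le> b \<Longrightarrow>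
       \<bar>w v - w u - w' r * (v - u)\<bar> \<le> C * (v - u) powr (1 + \<beta>)"
proof -
  obtain w' w'' where w': "set_integrable lborel {a..b} w'"
    and w'': "set_integrable lborel {a..b} w''" "Lp_on (sobolev_exponent \<beta>) a b w''"
    and w_eq: "\<forall>x\<in>{a..b}. w x = w a + (LBINT y=a..x. w' y)"
    and w'_eq: "\<forall>x\<in>{a..b}. w' x = w' a + (LBINT y=a..x. w'' y)"
    using assms(3) unfolding W2p_def by blast
  obtain C where "C \<ge> 0" and C: "\<And>u v. a \<le> u \<Longrightarrow> u \<le> v \<Longrightarrow> v \<le> b \<Longrightarrow>
      (LINT y:{u..v}|lborel. \<bar>w'' y\<bar>) \<le> C * (v - u) powr \<beta>"
    using Lp_on_set_integral_abs_le_powr[OF assms(1,2) w''] by blast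
  have holder: "\<bar>w' v - w' u\<bar> \<le> C * (v - u) powr \<beta>" if uv: "a \<le> u" "u \<le> v" "v \<le> b" for u v
  proof -
    have "w' v - w' u = (LINT y:{u..v}|lborel. w'' y)"
      using w''(1) w'_eq uv by (rule indefinite_integral_diff)
    then have "\<bar>w' v - w' u\<bar> \<le> (LINT y:{u..v}|lborel. \<bar>w'' y\<bar>)"
      using set_integral_norm_bound[OF set_integrable_subset[OF w''(1), of "{u..v}"]] uv by simp
    also have "\<dots> \<le> C * (v - u) powr \<beta>"
      using uv by (rule C)
    finally show ?thesis .
  qed
  show ?thesis
  proof (rule that[OF \<open>C \<ge> 0\<close>])
    fix u r v
    assume uv: "a \<le> u" "u \<le> r" "r \<le> v" "v \<le> b"
    have w'_uv: "set_integrable lborel {u..v} w'"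
      using uv by (intro set_integrable_subset[OF w']) auto
    have const: "set_integrable lborel {u..v} (\<lambda>y. w' r)"
      by (rule borel_integrable_atLeastAtMost') auto
    have "w v - w u = (LINT y:{u..v}|lborel. w' y)"
      using uv by (intro indefinite_integral_diff[OF w' w_eq]) auto
    then have "w v - w u - w' r * (v - u) = (LINT y:{u..v}|lborel. w' y - w' r)"
      using uv w'_uv const by (simp add: set_integral_diff(2) set_integral_const)
    also have "\<bar>\<dots>\<bar> \<le> C * (v - u) powr \<beta> * (v - u)"
    proof (rule set_integral_Icc_abs_le)
      show "set_integrable lborel {u..v} (\<lambda>y. w' y - w' r)"
        using w'_uv const by (rule set_integral_diff(1))
      fix y
      assume y: "y \<in> {u..v}"
      have "\<bar>w' y - w' r\<bar> \<le> C * \<bar>y - r\<bar> powr \<beta>"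
        using holder[of y r] holder[of r y] y uv by (cases "y \<le> r") (auto simp: abs_minus_commute)
      also have "\<dots> \<le> C * (v - u) powr \<beta>"
        using \<open>C \<ge> 0\<close> y uv assms(1) by (intro mult_left_mono powr_mono2) auto
      finally show "\<bar>w' y - w' r\<bar> \<le> C * (v - u) powr \<beta>" .
    qed (use uv in auto)
    also have "\<dots> = C * (v - u) powr (1 + \<beta>)"
      using uv by (simp add: powr_add)
    finally show "\<bar>w v - w u - w' r * (v - u)\<bar> \<le> C * (v - u) powr (1 + \<beta>)" .
  qed
qed

text \<open>At an interior maximum the derivative \<open>w'\<close> vanishes, which upgrades the remainder estimate
  to flatness of order \<open>1 + \<beta>\<close>.\<close>
lemma W2p_flat_at_interior_max:
  fixes w :: "real \<Rightarrow> real" and a b x0 \<beta> :: real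
  assumes "0 < \<beta>" "\<beta> \<le> 1" "a < x0" "x0 < b"
    and "W2p (sobolev_exponent \<beta>) a b w"
    and max: "\<And>p. p \<in> {a..b} \<Longrightarrow> w p \<le> w x0"
  obtains C where "C \<ge> 0" "\<And>p. p \<in> {a..x0} \<Longrightarrow> \<bar>w p - w x0\<bar> \<le> C * (x0 - p) powr (1 + \<beta>)"
proof -
  obtain C w' where "C \<ge> 0" and remainder: "\<And>u r v. a \<le> u \<Longrightarrow> u \<le> r \<Longrightarrow> r \<le> v \<Longrightarrow> v \<le> b \<Longrightarrow>
       \<bar>w v - w u - w' r * (v - u)\<bar> \<le> C * (v - u) powr (1 + \<beta>)"
    using W2p_first_order_remainder[OF assms(1,2,5)] by metis
  have "\<forall>\<^sub>F t in at_right 0. t \<in> {0<..<min (x0 - a) (b - x0)}"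
    using assms(3,4) by (intro eventually_at_right_real) simp
  then have "\<forall>\<^sub>F t in at_right 0. \<bar>w' x0\<bar> \<le> C * t powr \<beta>"
  proof eventually_elim
    case (elim t)
    then have t: "0 < t" "x0 - t \<ge> a" "x0 + t \<le> b"
      by auto
    have powr_t: "C * t powr (1 + \<beta>) = C * t powr \<beta> * t"
      using t by (simp add: powr_add)
    have "\<bar>w (x0 + t) - w x0 - w' x0 * t\<bar> \<le> C * t powr \<beta> * t" "w (x0 + t) \<le> w x0"
      using remainder[of x0 x0 "x0 + t"] max[of "x0 + t"] t assms(3,4) powr_t by auto
    then have "w' x0 * t \<le> C * t powr \<beta> * t"
      by linarith
    then have "w' x0 \<le> C * t powr \<beta>"
      using t(1) by (rule mult_right_le_imp_le)
    moreover have "\<bar>w x0 - w (x0 - t) - w' x0 * t\<bar> \<le> C * t powr \<beta> * t" "w (x0 - t) \<le> w x0"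
      using remainder[of "x0 - t" x0 x0] max[of "x0 - t"] t assms(3,4) powr_t by auto
    then have "- w' x0 * t \<le> C * t powr \<beta> * t"
      by linarith
    then have "- w' x0 \<le> C * t powr \<beta>"
      using t(1) by (rule mult_right_le_imp_le)
    ultimately show ?case
      by (simp add: abs_le_iff)
  qed
  from tendsto_le[OF trivial_limit_at_right_real tendsto_mult_powr_at_right_0[OF assms(1)]
      tendsto_const this]
  have "w' x0 = 0"
    by simp
  show ?thesis
  proof (rule that[OF \<open>C \<ge> 0\<close>])
    fix p
    assume "p \<in> {a..x0}"
    then show "\<bar>w p - w x0\<bar> \<le> C * (x0 - p) powr (1 + \<beta>)"
      using remainder[of p x0 x0] \<open>w' x0 = 0\<close> assms(3,4) by (simp add: abs_minus_commute)
  qed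
qed

lemma frac_integral_second_deriv_nonpos_at_max:
  fixes w :: "real \<Rightarrow> real" and a b x0 \<alpha> \<beta> L :: real
  assumes "0 < \<alpha>" "\<alpha> < \<beta>" "\<beta> \<le> 1" "0 < a" "a < x0" "x0 < b"
    and cont: "continuous_on {0..x0} w"
    and max: "\<And>p. p \<in> {0..b} \<Longrightarrow> w p \<le> w x0"
    and W2p: "W2p (sobolev_exponent \<beta>) a b w"
    and F_def: "F = (\<lambda>x. LBINT p=0..x. (x - p) powr (-\<alpha>) * (w p - w 0))"
    and F_differentiable: "\<And>y. a < y \<Longrightarrow> y \<le> x0 \<Longrightarrow> F differentiable (at y)"
    and F'': "(deriv F has_real_derivative L) (at x0)"
  shows "L \<le> 0"
proof -
  have "0 < \<beta>" "\<And>p. p \<in> {a..b} \<Longrightarrow> w p \<le> w x0"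
    using assms(1,2,4) max by auto
  then obtain C where "C \<ge> 0"
    and flat: "\<And>p. p \<in> {a..x0} \<Longrightarrow> \<bar>w p - w x0\<bar> \<le> C * (x0 - p) powr (1 + \<beta>)"
    using W2p_flat_at_interior_max[OF _ assms(3,5,6) W2p] by metis
  define K where "K = 2 * C * 2 powr (1 + \<beta>) / (1 - \<alpha>)"
  show ?thesis
  proof (rule second_deriv_nonpos_of_second_difference_le[OF assms(5) _ F'', where \<gamma> = "\<beta> - \<alpha>"])
    show "\<And>y. a < y \<Longrightarrow> y \<le> x0 \<Longrightarrow> (F has_real_derivative deriv F y) (at y)"
      using F_differentiable by (simp add: DERIV_deriv_iff_real_differentiable)
    show "0 < \<beta> - \<alpha>"
      using assms by simp
    have "\<forall>\<^sub>F h in at_right 0. h \<in> {0<..<(x0 - a) / 2}"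
      using assms(5) by (intro eventually_at_right_real) simp
    then show "\<forall>\<^sub>F h in at_right 0. F x0 - 2 * F (x0 - h) + F (x0 - 2 * h) \<le> K * h powr (2 + (\<beta> - \<alpha>))"
    proof eventually_elim
      case (elim h)
      then have h: "0 < h" "2 * h < x0 - a"
        by auto
      have "F x0 - 2 * F (x0 - h) + F (x0 - 2 * h)
            \<le> 2 * C * (2 * h) powr (1 + \<beta>) * (h powr (1 - \<alpha>) / (1 - \<alpha>))"
        using assms h \<open>C \<ge> 0\<close> flat
        by (intro frac_integral_second_difference_le[OF _ _ _ _ _ _ cont _ _ F_def]) auto
      also have "\<dots> = K * h powr (2 + (\<beta> - \<alpha>))"
        using h by (simp add: K_def powr_mult powr_add[symmetric] field_simps)
      finally show ?case .
    qed
  qed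
qed


section \<open>The domain\<close>

lemma closure_Qst_subset:
  fixes s :: "real \<Rightarrow> real" and T :: real
  assumes "continuous_on {0..T} s"
  shows "closure (Qst s T) \<subseteq> {(x, t). 0 \<le> t \<and> t \<le> T \<and> 0 \<le> x \<and> x \<le> s t}"
proof (rule closure_minimal)
  let ?U = "UNIV \<times> {0..T} :: (real \<times> real) set"
  have U: "closed ?U"
    by (intro closed_Times) auto
  have "continuous_on ?U (\<lambda>z. s (snd z))"
    by (rule continuous_on_compose2[OF assms continuous_on_snd[OF continuous_on_id]]) auto
  then have "closed {z \<in> ?U. fst z \<le> s (snd z)}"
    by (rule continuous_on_closed_Collect_le[OF continuous_on_fst[OF continuous_on_id] _ U])
  with continuous_on_closed_Collect_le[OF continuous_on_const continuous_on_fst[OF continuous_on_id] U]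
  have "closed ({z \<in> ?U. 0 \<le> fst z} \<inter> {z \<in> ?U. fst z \<le> s (snd z)})"
    by (rule closed_Int)
  moreover have "{z \<in> ?U. 0 \<le> fst z} \<inter> {z \<in> ?U. fst z \<le> s (snd z)}
                 = {(x, t). 0 \<le> t \<and> t \<le> T \<and> 0 \<le> x \<and> x \<le> s t}"
    by auto
  ultimately show "closed {(x, t). 0 \<le> t \<and> t \<le> T \<and> 0 \<le> x \<and> x \<le> s t}"
    by simp
qed (auto simp: Qst_def)

lemma slice_in_closure_Qst:
  assumes "(x, t) \<in> Qst s T" "0 \<le> p" "p < s t"
  shows "(p, t) \<in> closure (Qst s T)"
proof (cases "p = 0")
  case False
  then have "(p, t) \<in> Qst s T"
    using assms by (auto simp: Qst_def)
  then show ?thesis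
    using closure_subset by blast
next
  case True
  show ?thesis
    unfolding closure_approachable
  proof (intro allI impI)
    fix e :: real
    assume "e > 0"
    define y where "y = min (e / 2) x"
    have "dist (y, t) (p, t) = \<bar>y\<bar>"
      using True by (simp add: dist_Pair_Pair dist_real_def)
    then have "(y, t) \<in> Qst s T" "dist (y, t) (p, t) < e"
      using assms \<open>e > 0\<close> by (auto simp: y_def Qst_def)
    then show "\<exists>z\<in>Qst s T. dist z (p, t) < e"
      by blast
  qed
qed

lemma interior_closure_Qst_subset:
  assumes "continuous_on {0..T} s"
  shows "interior (closure (Qst s T)) \<subseteq> Qst s T"
proof
  fix z
  assume "z \<in> interior (closure (Qst s T))"
  then obtain e where "e > 0" and ball: "ball z e \<subseteq> closure (Qst s T)"
    unfolding mem_interior by blast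
  obtain x t where z: "z = (x, t)"
    by (cases z)
  have "(x + d, t) \<in> closure (Qst s T)" "(x, t + d) \<in> closure (Qst s T)" if "\<bar>d\<bar> < e" for d
  proof -
    have "dist (x, t) (x + d, t) = \<bar>d\<bar>" "dist (x, t) (x, t + d) = \<bar>d\<bar>"
      by (simp_all add: dist_Pair_Pair dist_real_def)
    then show "(x + d, t) \<in> closure (Qst s T)" "(x, t + d) \<in> closure (Qst s T)"
      using ball that z by auto
  qed
  from this[of "- e / 2"] this[of "e / 2"]
  have "0 \<le> x - e / 2" "x + e / 2 \<le> s t" "0 \<le> t - e / 2" "t + e / 2 \<le> T"
    using closure_Qst_subset[OF assms] \<open>e > 0\<close> by auto
  then show "z \<in> Qst s T"
    using z \<open>e > 0\<close> by (auto simp: Qst_def)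
qed

lemma compact_closure_Qst:
  assumes "continuous_on {0..T} s"
  shows "compact (closure (Qst s T))"
proof -
  obtain B where B: "\<And>t. t \<in> {0..T} \<Longrightarrow> norm (s t) \<le> B"
    using compact_imp_bounded[OF compact_continuous_image[OF assms compact_Icc]]
    unfolding bounded_iff by (metis image_eqI)
  have "Qst s T \<subseteq> {0..B} \<times> {0..T}"
  proof
    fix z
    assume "z \<in> Qst s T"
    then obtain x t where "z = (x, t)" "0 < x" "x < s t" "0 < t" "t < T"
      by (auto simp: Qst_def)
    moreover have "norm (s t) \<le> B"
      using \<open>0 < t\<close> \<open>t < T\<close> by (intro B) simp
    ultimately show "z \<in> {0..B} \<times> {0..T}"
      by auto
  qed
  then have "bounded (Qst s T)"
    by (rule bounded_subset[OF compact_imp_bounded[OF compact_Times[OF compact_Icc compact_Icc]]])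
  then show ?thesis
    by (simp add: compact_closure)
qed

text \<open>The parabolic boundary described as a closed set: the points of the closure on the bottom,
  on the left side or on the moving boundary.\<close>
definition bottom_sides :: "(real \<Rightarrow> real) \<Rightarrow> real \<Rightarrow> (real \<times> real) set" where
  "bottom_sides s T = closure (Qst s T) \<inter>
     ({z. snd z \<le> 0} \<union> {z. fst z \<le> 0} \<union> {z \<in> UNIV \<times> {0..T}. s (snd z) \<le> fst z})"

lemma compact_bottom_sides:
  assumes "continuous_on {0..T} s"
  shows "compact (bottom_sides s T)"
proof -
  have "closed {z :: real \<times> real. snd z \<le> 0}"
    by (rule closed_Collect_le[OF continuous_on_snd[OF continuous_on_id] continuous_on_const])
  moreover have "closed {z :: real \<times> real. fst z \<le> 0}"
    by (rule closed_Collect_le[OF continuous_on_fst[OF continuous_on_id] continuous_on_const])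
  moreover have "continuous_on (UNIV \<times> {0..T}) (\<lambda>z. s (snd z))"
    by (rule continuous_on_compose2[OF assms continuous_on_snd[OF continuous_on_id]]) auto
  then have "closed {z \<in> UNIV \<times> {0..T}. s (snd z) \<le> fst z}"
    by (rule continuous_on_closed_Collect_le[OF _ continuous_on_fst[OF continuous_on_id]])
      (intro closed_Times; simp)
  ultimately have "closed ({z. snd z \<le> 0} \<union> {z. fst z \<le> 0} \<union> {z \<in> UNIV \<times> {0..T}. s (snd z) \<le> fst z})"
    by (intro closed_Un)
  then show ?thesis
    unfolding bottom_sides_def using compact_closure_Qst[OF assms] by (rule compact_Int_closed[rotated])
qed

lemma bottom_sides_subset_par_bdry:
  assumes "continuous_on {0..T} s" "T > 0"
  shows "bottom_sides s T \<subseteq> par_bdry s T"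
proof
  fix z
  assume z: "z \<in> bottom_sides s T"
  then have "z \<notin> Qst s T"
    by (cases z) (auto simp: bottom_sides_def Qst_def)
  then have "z \<notin> interior (closure (Qst s T))"
    using interior_closure_Qst_subset[OF assms(1)] by blast
  then have "z \<in> frontier (closure (Qst s T))"
    using z by (simp add: frontier_def bottom_sides_def)
  moreover have "z \<notin> {(x, T) | x. 0 < x \<and> x < s T}"
    using z assms(2) by (auto simp: bottom_sides_def)
  ultimately show "z \<in> par_bdry s T"
    unfolding par_bdry_def by simp
qed

lemma Qst_if_not_bottom_sides:
  assumes "continuous_on {0..T} s" "(x, t) \<in> closure (Qst s T)" "t < T" "(x, t) \<notin> bottom_sides s T"
  shows "(x, t) \<in> Qst s T"
  using assms closure_Qst_subset[OF assms(1)] by (auto simp: bottom_sides_def Qst_def)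

lemma bottom_sides_nonempty:
  assumes "T > 0" "continuous_on {0..T} s" "s 0 > 0"
  shows "bottom_sides s T \<noteq> {}"
proof -
  have "0 \<in> {0..T}"
    using assms(1) by simp
  from assms(2)[unfolded continuous_on_iff, rule_format, OF this assms(3)]
  obtain d where "d > 0" and d: "\<And>t. t \<in> {0..T} \<Longrightarrow> dist t 0 < d \<Longrightarrow> dist (s t) (s 0) < s 0"
    by blast
  define t where "t = min (d / 2) (T / 2)"
  have t: "0 < t" "t < T" "t < d"
    using \<open>d > 0\<close> assms(1) by (auto simp: t_def)
  then have "s t > 0"
    using d[of t] by (auto simp: dist_real_def)
  then have "(s t / 2, t) \<in> Qst s T"
    using t by (simp add: Qst_def)
  then have "(0, t) \<in> closure (Qst s T)"
    using slice_in_closure_Qst[of "s t / 2" t s T 0] \<open>s t > 0\<close> by simp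
  then show ?thesis
    unfolding bottom_sides_def by auto
qed

section \<open>The maximum principle\<close>

lemma exists_gt_if_gt_on_closure:
  fixes f :: "'a::metric_space \<Rightarrow> real"
  assumes "continuous_on (closure S) f" "q \<in> closure S" "M < f q"
  obtains z where "z \<in> S" "M < f z"
proof -
  obtain d where "d > 0" and d: "\<And>z. z \<in> closure S \<Longrightarrow> dist z q < d \<Longrightarrow> dist (f z) (f q) < f q - M"
    using assms unfolding continuous_on_iff by (metis diff_gt_0_iff_gt)
  obtain z where "z \<in> S" "dist z q < d"
    using assms(2) \<open>d > 0\<close> unfolding closure_approachable by blast
  then show ?thesis
    using d[of z] closure_subset that by (force simp: dist_real_def)
qed

lemma exists_perturbed_interior_max:
  fixes u :: "real \<Rightarrow> real \<Rightarrow> real"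
  assumes "T > 0" and s: "continuous_on {0..T} s"
    and cont: "continuous_on (closure (Qst s T)) (case_prod u)"
    and bdry: "\<And>z. z \<in> bottom_sides s T \<Longrightarrow> case_prod u z \<le> M"
    and q: "q \<in> closure (Qst s T)" "M < case_prod u q"
  obtains e x0 t0 where "e > 0" "(x0, t0) \<in> Qst s T"
    "\<And>x t. (x, t) \<in> closure (Qst s T) \<Longrightarrow> t \<le> t0 \<Longrightarrow> u x t - e * t \<le> u x0 t0 - e * t0"
proof -
  obtain z1 where "z1 \<in> Qst s T" "M < case_prod u z1"
    by (rule exists_gt_if_gt_on_closure[OF cont q])
  then obtain x1 t1 where q1: "(x1, t1) \<in> Qst s T" and "M < u x1 t1"
    by (cases z1) auto
  have t1: "0 < t1" "t1 < T"
    using q1(1) by (auto simp: Qst_def)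
  define e where "e = (u x1 t1 - M) / (2 * T)"
  have "e > 0"
    using \<open>M < u x1 t1\<close> assms(1) by (simp add: e_def)
  define S where "S = closure (Qst s T) \<inter> {z. snd z \<le> t1}"
  define v where "v z = case_prod u z - e * snd z" for z
  have "compact S"
    unfolding S_def using compact_closure_Qst[OF s]
    by (intro compact_Int_closed closed_Collect_le continuous_intros)
  moreover have "continuous_on S v"
    unfolding v_def S_def by (intro continuous_intros continuous_on_subset[OF cont]) auto
  moreover have "(x1, t1) \<in> S"
    unfolding S_def using q1(1) closure_subset by auto
  ultimately obtain z0 where z0: "z0 \<in> S" and z0_max: "\<And>z. z \<in> S \<Longrightarrow> v z \<le> v z0"
    using continuous_attains_sup[of S v] by blast
  obtain x0 t0 where z0_eq: "z0 = (x0, t0)"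
    by (cases z0)
  have "e * t1 < e * T"
    using \<open>e > 0\<close> t1 by simp
  also have "e * T = (u x1 t1 - M) / 2"
    using assms(1) by (simp add: e_def)
  finally have "M < v (x1, t1)"
    using \<open>M < u x1 t1\<close> by (simp add: v_def)
  then have "M < v z0"
    using z0_max[OF \<open>(x1, t1) \<in> S\<close>] by simp
  have z0_closure: "(x0, t0) \<in> closure (Qst s T)" "t0 \<le> t1"
    using z0 z0_eq by (auto simp: S_def)
  then have "0 \<le> t0"
    using closure_Qst_subset[OF s] by auto
  have "(x0, t0) \<notin> bottom_sides s T"
  proof
    assume "(x0, t0) \<in> bottom_sides s T"
    then have "u x0 t0 \<le> M"
      using bdry by fastforce
    moreover have "v z0 \<le> u x0 t0"
      using \<open>e > 0\<close> \<open>0 \<le> t0\<close> z0_eq by (simp add: v_def)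
    ultimately show False
      using \<open>M < v z0\<close> by simp
  qed
  then have "(x0, t0) \<in> Qst s T"
    using Qst_if_not_bottom_sides[OF s z0_closure(1)] z0_closure(2) t1 by simp
  moreover have "u x t - e * t \<le> u x0 t0 - e * t0" if "(x, t) \<in> closure (Qst s T)" "t \<le> t0" for x t
    using z0_max[of "(x, t)"] that z0_closure z0_eq by (auto simp: S_def v_def)
  ultimately show ?thesis
    using that \<open>e > 0\<close> by blast
qed

lemma has_real_derivative_ge_if_left_difference_ge:
  fixes g :: "real \<Rightarrow> real"
  assumes "(g has_real_derivative D) (at t0)" "\<delta> > 0"
    and difference: "\<And>t. t0 - \<delta> < t \<Longrightarrow> t < t0 \<Longrightarrow> e * (t0 - t) \<le> g t0 - g t"
  shows "e \<le> D"
proof -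
  have "(g has_real_derivative D) (at t0 within {..<t0})"
    using assms(1) by (rule has_field_derivative_at_within)
  then have "((\<lambda>t. (g t - g t0) / (t - t0)) \<longlongrightarrow> D) (at_left t0)"
    unfolding has_field_derivative_iff by simp
  moreover have "\<forall>\<^sub>F t in at_left t0. t \<in> {t0 - \<delta><..<t0}"
    using assms(2) by (intro eventually_at_left_real) simp
  then have "\<forall>\<^sub>F t in at_left t0. e \<le> (g t - g t0) / (t - t0)"
  proof eventually_elim
    case (elim t)
    then have "e \<le> (g t0 - g t) / (t0 - t)"
      using difference[of t] by (simp add: pos_le_divide_eq)
    also have "(g t0 - g t) / (t0 - t) = (g t - g t0) / (t - t0)"
      by (metis minus_diff_eq minus_divide_divide)
    finally show ?case .
  qed
  ultimately show ?thesis
    by (rule tendsto_lowerbound) simp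
qed

lemma time_derivative_ge_at_perturbed_max:
  fixes u :: "real \<Rightarrow> real \<Rightarrow> real"
  assumes s: "continuous_on {0..T} s" and z0: "(x0, t0) \<in> Qst s T"
    and max: "\<And>t. (x0, t) \<in> Qst s T \<Longrightarrow> t \<le> t0 \<Longrightarrow> u x0 t - e * t \<le> u x0 t0 - e * t0"
    and D: "((\<lambda>\<tau>. u x0 \<tau>) has_real_derivative D) (at t0)"
  shows "e \<le> D"
proof -
  have x0: "0 < x0" "x0 < s t0" "0 < t0" "t0 < T"
    using z0 by (auto simp: Qst_def)
  then obtain d where "d > 0"
    and d: "\<And>t. t \<in> {0..T} \<Longrightarrow> dist t t0 < d \<Longrightarrow> dist (s t) (s t0) < s t0 - x0"
    using s[unfolded continuous_on_iff, rule_format, of t0 "s t0 - x0"] by auto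
  show ?thesis
  proof (rule has_real_derivative_ge_if_left_difference_ge[OF D, of "min d t0"])
    show "min d t0 > 0"
      using \<open>d > 0\<close> x0 by simp
    fix t
    assume t: "t0 - min d t0 < t" "t < t0"
    then have "dist (s t) (s t0) < s t0 - x0"
      using x0 by (intro d) (auto simp: dist_real_def)
    then have "(x0, t) \<in> Qst s T"
      using t x0 by (auto simp: Qst_def dist_real_def)
    from max[OF this] t show "e * (t0 - t) \<le> u x0 t0 - u x0 t"
      by (simp add: algebra_simps)
  qed
qed

lemma deriv_caputo_nonpos_at_max:
  fixes u :: "real \<Rightarrow> real \<Rightarrow> real"
  assumes "0 < \<alpha>" "\<alpha> < \<beta>" "\<beta> \<le> 1" and z0: "(x0, t0) \<in> Qst s T"
    and W2p: "W2p_slices (sobolev_exponent \<beta>) s T u"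
    and cont: "continuous_on {0..x0} (\<lambda>p. u p t0)"
    and max: "\<And>p. 0 \<le> p \<Longrightarrow> p < s t0 \<Longrightarrow> u p t0 \<le> u x0 t0"
    and frac_int_differentiable: "\<forall>y\<in>{0<..<s t0}. frac_int \<alpha> u t0 differentiable (at y)"
    and caputo_differentiable: "(\<lambda>y. caputo \<alpha> u y t0) differentiable (at x0)"
  shows "deriv (\<lambda>y. caputo \<alpha> u y t0) x0 \<le> 0"
proof -
  have x0: "0 < x0" "x0 < s t0" "0 < t0" "t0 < T"
    using z0 by (auto simp: Qst_def)
  define b where "b = (x0 + s t0) / 2"
  have b: "x0 < b" "b < s t0"
    using x0 by (auto simp: b_def)
  define G where "G = Gamma (1 - \<alpha>)"
  have "G > 0"
    using assms(2,3) by (simp add: G_def Gamma_real_pos)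
  have "((\<lambda>y. caputo \<alpha> u y t0) has_real_derivative deriv (\<lambda>y. caputo \<alpha> u y t0) x0) (at x0)"
    using caputo_differentiable by (simp add: DERIV_deriv_iff_real_differentiable)
  then have "((\<lambda>y. G * caputo \<alpha> u y t0) has_real_derivative G * deriv (\<lambda>y. caputo \<alpha> u y t0) x0) (at x0)"
    by (rule DERIV_cmult)
  moreover have "(\<lambda>y. G * caputo \<alpha> u y t0) = deriv (frac_int \<alpha> u t0)"
    using \<open>G > 0\<close> by (simp add: fun_eq_iff caputo_def G_def)
  ultimately have F'': "(deriv (frac_int \<alpha> u t0) has_real_derivative G * deriv (\<lambda>y. caputo \<alpha> u y t0) x0) (at x0)"
    by simp
  have W2p_slice: "W2p (sobolev_exponent \<beta>) (x0 / 2) b (\<lambda>p. u p t0)"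
    using W2p x0 b unfolding W2p_slices_def by auto
  have frac_int_eq: "frac_int \<alpha> u t0 = (\<lambda>x. LBINT p=0..x. (x - p) powr (-\<alpha>) * (u p t0 - u 0 t0))"
    by (simp add: fun_eq_iff frac_int_def)
  have "G * deriv (\<lambda>y. caputo \<alpha> u y t0) x0 \<le> 0"
    by (rule frac_integral_second_deriv_nonpos_at_max[OF assms(1-3) _ _ b(1) cont _ W2p_slice frac_int_eq _ F''])
      (use x0 b max frac_int_differentiable in auto)
  then show ?thesis
    using \<open>G > 0\<close> by (simp add: mult_le_0_iff)
qed

lemma continuous_on_slice_Qst:
  assumes "continuous_on (closure (Qst s T)) (case_prod u)" "(x0, t0) \<in> Qst s T"
  shows "continuous_on {0..x0} (\<lambda>p. u p t0)"
proof -
  have "(\<lambda>p. (p, t0)) ` {0..x0} \<subseteq> closure (Qst s T)"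
    using slice_in_closure_Qst[OF assms(2)] assms(2) by (auto simp: Qst_def)
  moreover have "continuous_on {0..x0} (\<lambda>p. (p, t0))"
    by (intro continuous_intros)
  ultimately show ?thesis
    using continuous_on_compose2[OF assms(1)] by fastforce
qed

lemma caputo_heat_source_ge_at_perturbed_max:
  fixes u f :: "real \<Rightarrow> real \<Rightarrow> real"
  assumes "0 < \<alpha>" "\<alpha> < \<beta>" "\<beta> \<le> 1" and s: "continuous_on {0..T} s"
    and cont: "continuous_on (closure (Qst s T)) (case_prod u)"
    and W2p: "W2p_slices (sobolev_exponent \<beta>) s T u"
    and sol: "caputo_heat_solution \<alpha> s T u f"
    and z0: "(x0, t0) \<in> Qst s T"
    and z0_max: "\<And>x t. (x, t) \<in> closure (Qst s T) \<Longrightarrow> t \<le> t0 \<Longrightarrow> u x t - e * t \<le> u x0 t0 - e * t0"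
  shows "e \<le> f x0 t0"
proof -
  obtain ut where ut: "((\<lambda>\<tau>. u x0 \<tau>) has_real_derivative ut) (at t0)"
    and frac_int_differentiable: "\<forall>y\<in>{0<..<s t0}. frac_int \<alpha> u t0 differentiable (at y)"
    and caputo_differentiable: "(\<lambda>y. caputo \<alpha> u y t0) differentiable (at x0)"
    and equation: "ut - deriv (\<lambda>y. caputo \<alpha> u y t0) x0 = f x0 t0"
    using sol z0 unfolding caputo_heat_solution_def by fastforce
  have "e \<le> ut"
  proof (rule time_derivative_ge_at_perturbed_max[where u = u, OF s z0 _ ut])
    show "u x0 t - e * t \<le> u x0 t0 - e * t0" if "(x0, t) \<in> Qst s T" "t \<le> t0" for t
      using z0_max that closure_subset by blast
  qed
  moreover have "deriv (\<lambda>y. caputo \<alpha> u y t0) x0 \<le> 0"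
  proof (rule deriv_caputo_nonpos_at_max[OF assms(1-3) z0 W2p continuous_on_slice_Qst[OF cont z0]
        _ frac_int_differentiable caputo_differentiable])
    show "u p t0 \<le> u x0 t0" if "0 \<le> p" "p < s t0" for p
      using z0_max[OF slice_in_closure_Qst[OF z0 that]] by simp
  qed
  ultimately show ?thesis
    using equation by linarith
qed

theorem caputo_heat_max_principle:
  fixes s :: "real \<Rightarrow> real" and u f :: "real \<Rightarrow> real \<Rightarrow> real"
  assumes "T > 0" "0 < \<alpha>" "\<alpha> < \<beta>" "\<beta> \<le> 1"
    and s: "continuous_on {0..T} s" "s 0 > 0"
    and cont: "continuous_on (closure (Qst s T)) (case_prod u)"
    and W2p: "W2p_slices (sobolev_exponent \<beta>) s T u"
    and sol: "caputo_heat_solution \<alpha> s T u f"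
    and f: "\<forall>(x, t)\<in>Qst s T. f x t \<le> 0"
  shows "\<exists>p\<in>par_bdry s T. \<forall>q\<in>closure (Qst s T). case_prod u q \<le> case_prod u p"
proof -
  have "bottom_sides s T \<subseteq> closure (Qst s T)"
    by (simp add: bottom_sides_def)
  then obtain p where p: "p \<in> bottom_sides s T"
    and p_max: "\<And>z. z \<in> bottom_sides s T \<Longrightarrow> case_prod u z \<le> case_prod u p"
    using continuous_attains_sup[OF compact_bottom_sides[OF s(1)] bottom_sides_nonempty[OF assms(1) s]
        continuous_on_subset[OF cont]] by blast
  have "case_prod u q \<le> case_prod u p" if q: "q \<in> closure (Qst s T)" for q
  proof (rule ccontr)
    assume "\<not> case_prod u q \<le> case_prod u p"
    then have "case_prod u p < case_prod u q"
      by simp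
    then obtain e x0 t0 where "e > 0" and z0: "(x0, t0) \<in> Qst s T"
      and z0_max: "\<And>x t. (x, t) \<in> closure (Qst s T) \<Longrightarrow> t \<le> t0 \<Longrightarrow> u x t - e * t \<le> u x0 t0 - e * t0"
      using exists_perturbed_interior_max[OF assms(1) s(1) cont p_max q] by metis
    have "e \<le> f x0 t0"
      by (rule caputo_heat_source_ge_at_perturbed_max[OF assms(2-4) s(1) cont W2p sol z0 z0_max])
    then show False
      using f z0 \<open>e > 0\<close> by fastforce
  qed
  then show ?thesis
    using p bottom_sides_subset_par_bdry[OF s(1) assms(1)] by blast
qed

section \<open>The minimum principle\<close>

lemma Lp_on_uminus: "Lp_on p a b (\<lambda>y. - g y) \<longleftrightarrow> Lp_on p a b g"
proof -
  have "set_borel_measurable lborel {a..b} (\<lambda>y. - g y) \<longleftrightarrow> set_borel_measurable lborel {a..b} g"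
    unfolding set_borel_measurable_def by (simp add: borel_measurable_uminus_eq)
  then show ?thesis
    unfolding Lp_on_def by (simp only: abs_minus_cancel)
qed

lemma W2p_uminus:
  assumes "W2p p a b g"
  shows "W2p p a b (\<lambda>x. - g x)"
proof -
  obtain g' g'' where g': "set_integrable lborel {a..b} g'"
    and g'': "set_integrable lborel {a..b} g''" "Lp_on p a b g''"
    and g_eq: "\<forall>x\<in>{a..b}. g x = g a + (LBINT y=a..x. g' y)"
    and g'_eq: "\<forall>x\<in>{a..b}. g' x = g' a + (LBINT y=a..x. g'' y)"
    using assms unfolding W2p_def by blast
  have uminus_integrable: "set_integrable lborel {a..b} (\<lambda>y. - f y)"
    if "set_integrable lborel {a..b} f" for f :: "real \<Rightarrow> real"
    using that unfolding set_integrable_def by simp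
  show ?thesis
    unfolding W2p_def
  proof (rule exI[of _ "\<lambda>y. - g' y"], rule exI[of _ "\<lambda>y. - g'' y"], intro conjI ballI)
    show "set_integrable lborel {a..b} (\<lambda>y. - g' y)" "set_integrable lborel {a..b} (\<lambda>y. - g'' y)"
      using g' g''(1) by (simp_all add: uminus_integrable)
    show "Lp_on p a b (\<lambda>y. - g'' y)"
      using g''(2) by (simp add: Lp_on_uminus)
  next
    fix x
    assume x: "x \<in> {a..b}"
    show "- g x = - g a + (LBINT y=a..x. - g' y)"
      using g_eq[rule_format, OF x] by (simp add: interval_lebesgue_integral_uminus)
    show "- g' x = - g' a + (LBINT y=a..x. - g'' y)"
      using g'_eq[rule_format, OF x] by (simp add: interval_lebesgue_integral_uminus)
  qed
qed

lemma W2p_slices_uminus: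
  assumes "W2p_slices p s T u"
  shows "W2p_slices p s T (\<lambda>x t. - u x t)"
  using assms by (simp add: W2p_slices_def W2p_uminus)

lemma frac_int_uminus: "frac_int \<alpha> (\<lambda>x t. - u x t) t = (\<lambda>y. - frac_int \<alpha> u t y)"
proof
  fix y
  have "(\<lambda>p. (y - p) powr (-\<alpha>) * (- u p t - - u 0 t)) = (\<lambda>p. - ((y - p) powr (-\<alpha>) * (u p t - u 0 t)))"
    by (simp add: fun_eq_iff algebra_simps)
  then show "frac_int \<alpha> (\<lambda>x t. - u x t) t y = - frac_int \<alpha> u t y"
    unfolding frac_int_def by (simp only: interval_lebesgue_integral_uminus)
qed

lemma caputo_uminus:
  assumes "frac_int \<alpha> u t differentiable (at y)"
  shows "caputo \<alpha> (\<lambda>x t. - u x t) y t = - caputo \<alpha> u y t"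
proof -
  have "(frac_int \<alpha> u t has_real_derivative deriv (frac_int \<alpha> u t) y) (at y)"
    using assms by (simp add: DERIV_deriv_iff_real_differentiable)
  then have "deriv (\<lambda>y. - frac_int \<alpha> u t y) y = - deriv (frac_int \<alpha> u t) y"
    by (intro DERIV_imp_deriv DERIV_minus)
  then show ?thesis
    unfolding caputo_def frac_int_uminus by simp
qed

lemma caputo_uminus_has_real_derivative:
  assumes "\<forall>y\<in>{0<..<r}. frac_int \<alpha> u t differentiable (at y)" "x \<in> {0<..<r}"
    and "(\<lambda>y. caputo \<alpha> u y t) differentiable (at x)"
  shows "((\<lambda>y. caputo \<alpha> (\<lambda>x t. - u x t) y t) has_real_derivative - deriv (\<lambda>y. caputo \<alpha> u y t) x) (at x)"
proof -
  have "((\<lambda>y. caputo \<alpha> u y t) has_real_derivative deriv (\<lambda>y. caputo \<alpha> u y t) x) (at x)"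
    using assms(3) by (simp add: DERIV_deriv_iff_real_differentiable)
  then have "((\<lambda>y. - caputo \<alpha> u y t) has_real_derivative - deriv (\<lambda>y. caputo \<alpha> u y t) x) (at x)"
    by (rule DERIV_minus)
  then show ?thesis
    by (rule has_field_derivative_transform_within_open[where S = "{0<..<r}"])
      (use assms caputo_uminus in auto)
qed

lemma caputo_heat_solution_uminus:
  assumes "caputo_heat_solution \<alpha> s T u f"
  shows "caputo_heat_solution \<alpha> s T (\<lambda>x t. - u x t) (\<lambda>x t. - f x t)"
proof -
  obtain ut where ut_cont: "continuous_on (Qst s T) (\<lambda>(x, t). ut x t)"
    and ut: "\<And>x t. (x, t) \<in> Qst s T \<Longrightarrow>
      ((\<lambda>\<tau>. u x \<tau>) has_real_derivative ut x t) (at t) \<and>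
      (\<forall>y\<in>{0<..<s t}. frac_int \<alpha> u t differentiable (at y)) \<and>
      (\<lambda>y. caputo \<alpha> u y t) differentiable (at x) \<and>
      ut x t - deriv (\<lambda>y. caputo \<alpha> u y t) x = f x t"
    using assms unfolding caputo_heat_solution_def by fast
  have "continuous_on (Qst s T) (\<lambda>(x, t). - ut x t)"
    using continuous_on_minus[OF ut_cont] by (simp add: case_prod_beta')
  moreover have "((\<lambda>\<tau>. - u x \<tau>) has_real_derivative - ut x t) (at t) \<and>
      (\<forall>y\<in>{0<..<s t}. frac_int \<alpha> (\<lambda>x t. - u x t) t differentiable (at y)) \<and>
      (\<lambda>y. caputo \<alpha> (\<lambda>x t. - u x t) y t) differentiable (at x) \<and>
      - ut x t - deriv (\<lambda>y. caputo \<alpha> (\<lambda>x t. - u x t) y t) x = - f x t"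
    if xt: "(x, t) \<in> Qst s T" for x t
  proof -
    note ut_xt = ut[OF xt]
    have "x \<in> {0<..<s t}"
      using xt by (simp add: Qst_def)
    then have caputo': "((\<lambda>y. caputo \<alpha> (\<lambda>x t. - u x t) y t) has_real_derivative
        - deriv (\<lambda>y. caputo \<alpha> u y t) x) (at x)"
      using ut_xt by (intro caputo_uminus_has_real_derivative) auto
    then show ?thesis
      using ut_xt DERIV_imp_deriv[OF caputo']
      by (auto simp: frac_int_uminus real_differentiable_def intro: DERIV_minus differentiable_minus)
  qed
  ultimately show ?thesis
    unfolding caputo_heat_solution_def by (intro exI[of _ "\<lambda>x t. - ut x t"]) auto
qed

corollary caputo_heat_min_principle:
  fixes s :: "real \<Rightarrow> real" and u f :: "real \<Rightarrow> real \<Rightarrow> real"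
  assumes "T > 0" "0 < \<alpha>" "\<alpha> < \<beta>" "\<beta> \<le> 1"
    and s: "continuous_on {0..T} s" "s 0 > 0"
    and cont: "continuous_on (closure (Qst s T)) (case_prod u)"
    and W2p: "W2p_slices (sobolev_exponent \<beta>) s T u"
    and sol: "caputo_heat_solution \<alpha> s T u f"
    and f: "\<forall>(x, t)\<in>Qst s T. f x t \<ge> 0"
  shows "\<exists>p\<in>par_bdry s T. \<forall>q\<in>closure (Qst s T). case_prod u p \<le> case_prod u q"
proof -
  have "continuous_on (closure (Qst s T)) (case_prod (\<lambda>x t. - u x t))"
    using continuous_on_minus[OF cont] by (simp add: case_prod_beta')
  moreover have "\<forall>(x, t)\<in>Qst s T. - f x t \<le> 0"
    using f by auto
  ultimately show ?thesis
    using caputo_heat_max_principle[OF assms(1-4) s _ W2p_slices_uminus[OF W2p]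
        caputo_heat_solution_uminus[OF sol]]
    by (auto simp: case_prod_beta')
qed

theorem lemma8:
  fixes s :: "real \<Rightarrow> real" and u f :: "real \<Rightarrow> real \<Rightarrow> real"
    and T b \<alpha> \<beta> M :: real
  assumes "T > 0" "b > 0" "0 < \<alpha>" "\<alpha> < 1" "M > 0"
    and "continuous_on {0..T} s" "s 0 = b"
    and "\<forall>t\<in>{0..T}. \<exists>s'. (s has_real_derivative s') (at t within {0..T}) \<and> 0 < s' \<and> s' \<le> M"
    and "continuous_on (closure (Qst s T)) (\<lambda>(x,t). u x t)"
    and "\<alpha> < \<beta>" "\<beta> \<le> 1"
    and "\<forall>t\<in>{0<..<T}. \<forall>\<epsilon> \<omega>. 0 < \<epsilon> \<and> \<epsilon> < \<omega> \<and> \<omega> < s t \<longrightarrow>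
           W2p (if \<beta> = 1 then \<infinity> else ereal (1 / (1 - \<beta>))) \<epsilon> \<omega> (\<lambda>x. u x t)"
    and "\<exists>ut. continuous_on (Qst s T) (\<lambda>(x,t). ut x t) \<and>
           (\<forall>(x,t)\<in>Qst s T.
              ((\<lambda>\<tau>. u x \<tau>) has_real_derivative ut x t) (at t) \<and>
              (\<forall>y\<in>{0<..<s t}. frac_int \<alpha> u t differentiable (at y)) \<and>
              (\<lambda>y. caputo \<alpha> u y t) differentiable (at x) \<and>
              ut x t - deriv (\<lambda>y. caputo \<alpha> u y t) x = f x t)"
  shows "((\<forall>(x,t)\<in>Qst s T. f x t \<le> 0) \<longrightarrow>
            (\<exists>p\<in>par_bdry s T. \<forall>q\<in>closure (Qst s T). case_prod u q \<le> case_prod u p))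
       \<and> ((\<forall>(x,t)\<in>Qst s T. f x t \<ge> 0) \<longrightarrow>
            (\<exists>p\<in>par_bdry s T. \<forall>q\<in>closure (Qst s T). case_prod u p \<le> case_prod u q))"
proof -
  have "s 0 > 0"
    using assms(2,7) by simp
  moreover have "W2p_slices (sobolev_exponent \<beta>) s T u"
    using assms(12) unfolding W2p_slices_def sobolev_exponent_def .
  moreover have "caputo_heat_solution \<alpha> s T u f"
    using assms(13) unfolding caputo_heat_solution_def .
  ultimately show ?thesis
    using caputo_heat_max_principle[OF assms(1,3,10,11,6)] caputo_heat_min_principle[OF assms(1,3,10,11,6)]
      assms(9) by blast
qed

end
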